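(* Let $D=\operatorname{diag}(d_1,\dots,d_n)$ with $d_i>0$, and let $L\in\mathbb{R}^{N\times N}$ be symmetric with nonpositive off-diagonal entries and $L\mathbf{1}=0$. Then for every $1\le p\le\infty$, $M^+_p[-L\otimes D]=0$.
   Context: $M^+_p[f]$ denotes the strong least upper bound logarithmic Lipschitz constant on $\mathbb{R}^{nN}$ induced by the standard $p$-norm: $M^+_p[f]=\sup_{u\neq v}\lim_{h\to0^+}\frac1h\left(\frac{\|u-v+h(f(u)-f(v))\|_p}{\|u-v\|_p}-1\right)$; here the linear map $u\mapsto-(L\otimes D)u$. $\otimes$ is the Kronecker product and $\mathbf{1}=(1,\dots,1)^T$. *)

theory Defs
  imports Complex_Main "HOL-Library.Extended_Real"
begin

definition rvec :: "nat \<Rightarrow> (nat \<Rightarrow> real) set" where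
  "rvec m = {x. \<forall>i\<ge>m. x i = 0}"

definition pnorm :: "ereal \<Rightarrow> nat \<Rightarrow> (nat \<Rightarrow> real) \<Rightarrow> real" where
  "pnorm p m x =
     (if p = \<infinity> then Max (insert 0 ((\<lambda>i. \<bar>x i\<bar>) ` {..<m}))
      else (\<Sum>i<m. \<bar>x i\<bar> powr real_of_ereal p) powr (1 / real_of_ereal p))"

definition logLip_sup :: "ereal \<Rightarrow> nat \<Rightarrow> ((nat \<Rightarrow> real) \<Rightarrow> (nat \<Rightarrow> real)) \<Rightarrow> ereal" where
  "logLip_sup p m f =
     (SUP uv \<in> {(u, v). u \<in> rvec m \<and> v \<in> rvec m \<and> u \<noteq> v}.
        ereal (Lim (at_right 0)
          (\<lambda>h. (pnorm p m (\<lambda>i. fst uv i - snd uv i + h * (f (fst uv) i - f (snd uv) i))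
                 / pnorm p m (\<lambda>i. fst uv i - snd uv i) - 1) / h)))"

definition mat_vec :: "nat \<Rightarrow> (nat \<Rightarrow> nat \<Rightarrow> real) \<Rightarrow> (nat \<Rightarrow> real) \<Rightarrow> (nat \<Rightarrow> real)" where
  "mat_vec m A u = (\<lambda>k. if k < m then (\<Sum>l<m. A k l * u l) else 0)"

text \<open>Kronecker product of an N x N matrix L and an n x n matrix D (an (N n) x (N n) matrix),
  with the standard index convention: row (i, a) is index i * n + a.\<close>
definition kron :: "nat \<Rightarrow> (nat \<Rightarrow> nat \<Rightarrow> real) \<Rightarrow> (nat \<Rightarrow> nat \<Rightarrow> real) \<Rightarrow> (nat \<Rightarrow> nat \<Rightarrow> real)" where
  "kron n L D = (\<lambda>k l. L (k div n) (l div n) * D (k mod n) (l mod n))"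

definition diag_mat :: "(nat \<Rightarrow> real) \<Rightarrow> (nat \<Rightarrow> nat \<Rightarrow> real)" where
  "diag_mat d = (\<lambda>a b. if a = b then d a else 0)"

end

theory Submission
  imports Defs "HOL-Analysis.Analysis"
begin

text \<open>The matrix \<open>A = -(L \<otimes> D)\<close> is symmetric, has nonnegative off-diagonal entries and zero
  row sums. Hence for small \<open>h > 0\<close> the matrix \<open>I + h A\<close> is doubly stochastic, and by Jensen's
  inequality it does not increase any \<open>p\<close>-norm. So every difference quotient
  \<open>(\<parallel>w + h A w\<parallel> / \<parallel>w\<parallel> - 1) / h\<close> is eventually nonpositive; it converges because
  \<open>h \<mapsto> \<parallel>w + h A w\<parallel>\<close> is convex, so every limit in the supremum is at most \<open>0\<close>. The constant
  vector lies in the kernel of \<open>A\<close> and attains the value \<open>0\<close>.\<close>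

lemma powr_convex_nonneg:
  assumes "(r::real) \<ge> 1"
  shows "convex_on {0..} (\<lambda>x::real. x powr r)"
proof -
  have shrink: "(s * z) powr r \<le> s * z powr r" if "0 \<le> s" "s \<le> 1" "0 \<le> z" for s z :: real
  proof -
    have "s powr r \<le> s"
      using powr_mono'[of 1 r s] that assms by simp
    then show ?thesis
      using that by (simp add: powr_mult mult_right_mono)
  qed
  show ?thesis
  proof (rule convex_onI)
    fix t x y :: real
    assume t: "0 < t" "t < 1" and xy: "x \<in> {0..}" "y \<in> {0..}"
    consider "x = 0" | "y = 0" | "x > 0" "y > 0"
      using xy by force
    then show "((1 - t) *\<^sub>R x + t *\<^sub>R y) powr r \<le> (1 - t) * x powr r + t * y powr r"
    proof cases
      case 1
      then show ?thesis using shrink[of t y] t xy by simp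
    next
      case 2
      then show ?thesis using shrink[of "1 - t" x] t xy by simp
    next
      case 3
      then show ?thesis using convex_onD[OF powr_convex[OF assms], of t x y] t by simp
    qed
  qed (simp add: convex_real_interval)
qed

lemma sum_abs_powr_convex:
  fixes x y :: "'i \<Rightarrow> real"
  assumes "r \<ge> 1" "0 \<le> t" "t \<le> 1"
  shows "(\<Sum>i\<in>S. \<bar>(1 - t) * x i + t * y i\<bar> powr r)
           \<le> (1 - t) * (\<Sum>i\<in>S. \<bar>x i\<bar> powr r) + t * (\<Sum>i\<in>S. \<bar>y i\<bar> powr r)"
proof -
  have "\<bar>(1 - t) * x i + t * y i\<bar> powr r \<le> (1 - t) * \<bar>x i\<bar> powr r + t * \<bar>y i\<bar> powr r" for i
  proof -
    have "\<bar>(1 - t) * x i + t * y i\<bar> powr r \<le> ((1 - t) * \<bar>x i\<bar> + t * \<bar>y i\<bar>) powr r"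
      using assms by (intro powr_mono2) (auto intro: order_trans[OF abs_triangle_ineq] simp: abs_mult)
    also have "\<dots> \<le> (1 - t) * \<bar>x i\<bar> powr r + t * \<bar>y i\<bar> powr r"
      using convex_onD[OF powr_convex_nonneg[OF assms(1)], of t "\<bar>x i\<bar>" "\<bar>y i\<bar>"] assms by simp
    finally show ?thesis .
  qed
  then show ?thesis
    by (simp add: sum_distrib_left sum.distrib[symmetric] sum_mono)
qed

definition lp_norm :: "real \<Rightarrow> nat \<Rightarrow> (nat \<Rightarrow> real) \<Rightarrow> real" where
  "lp_norm r m x = (\<Sum>i<m. \<bar>x i\<bar> powr r) powr (1 / r)"

lemma lp_norm_nonneg: "0 \<le> lp_norm r m x"
  unfolding lp_norm_def by simp

lemma lp_norm_powr: "r \<ge> 1 \<Longrightarrow> lp_norm r m x powr r = (\<Sum>i<m. \<bar>x i\<bar> powr r)"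
  unfolding lp_norm_def by (simp add: powr_powr sum_nonneg)

lemma lp_norm_pos: "i < m \<Longrightarrow> x i \<noteq> 0 \<Longrightarrow> 0 < lp_norm r m x"
proof -
  assume "i < m" "x i \<noteq> 0"
  then have "0 < \<bar>x i\<bar> powr r" by simp
  also have "\<dots> \<le> (\<Sum>i<m. \<bar>x i\<bar> powr r)"
    using \<open>i < m\<close> by (intro member_le_sum) auto
  finally show ?thesis unfolding lp_norm_def by simp
qed

lemma lp_norm_eq_0_iff: "r \<ge> 1 \<Longrightarrow> lp_norm r m x = 0 \<longleftrightarrow> (\<forall>i<m. x i = 0)"
  using lp_norm_pos[of _ m x r] by (auto simp: lp_norm_def)

lemma lp_norm_cong: "(\<And>i. i < m \<Longrightarrow> x i = y i) \<Longrightarrow> lp_norm r m x = lp_norm r m y"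
  unfolding lp_norm_def by (intro arg_cong[where f="\<lambda>s. s powr _"] sum.cong) auto

lemma lp_norm_scale: "r \<ge> 1 \<Longrightarrow> 0 \<le> c \<Longrightarrow> lp_norm r m (\<lambda>i. c * x i) = c * lp_norm r m x"
  unfolding lp_norm_def
  by (simp add: abs_mult powr_mult sum_distrib_left[symmetric] sum_nonneg powr_powr)

text \<open>Minkowski's inequality: \<open>(x + y) / (a + b)\<close> is a convex combination of the unit vectors
  \<open>x / a\<close> and \<open>y / b\<close>, and the unit ball is convex.\<close>
lemma lp_norm_triangle:
  assumes r: "r \<ge> 1"
  shows "lp_norm r m (\<lambda>i. x i + y i) \<le> lp_norm r m x + lp_norm r m y"
proof (cases "lp_norm r m x = 0 \<or> lp_norm r m y = 0")
  case True
  then show ?thesis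
    using lp_norm_cong[where x="\<lambda>i. x i + y i" and y=x and m=m and r=r]
      lp_norm_cong[where x="\<lambda>i. x i + y i" and y=y and m=m and r=r]
    by (auto simp: lp_norm_eq_0_iff[OF r] lp_norm_nonneg)
next
  case False
  define a b where "a = lp_norm r m x" and "b = lp_norm r m y"
  have a: "a > 0" and b: "b > 0"
    using False lp_norm_nonneg unfolding a_def b_def by (auto simp: less_le)
  define t where "t = b / (a + b)"
  have t: "0 \<le> t" "t \<le> 1"
    using a b unfolding t_def by auto
  have unit: "(\<Sum>i<m. \<bar>inverse c * z i\<bar> powr r) = 1" if "c = lp_norm r m z" "c > 0" for c z
    using lp_norm_powr[OF r, of m "\<lambda>i. inverse c * z i"] lp_norm_scale[OF r, of "inverse c" m z] that
    by simp
  have "(1 - t) * inverse a = inverse (a + b)" "t * inverse b = inverse (a + b)"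
    using a b unfolding t_def by (auto simp: field_simps)
  then have split: "inverse (a + b) * (x i + y i) = (1 - t) * (inverse a * x i) + t * (inverse b * y i)" for i
    by (simp add: mult.assoc[symmetric] distrib_left)
  have "(\<Sum>i<m. \<bar>inverse (a + b) * (x i + y i)\<bar> powr r) \<le> 1"
    unfolding split using sum_abs_powr_convex[OF r t, of "\<lambda>i. inverse a * x i" "\<lambda>i. inverse b * y i" "{..<m}"]
      unit[OF a_def a] unit[OF b_def b] by simp
  then have "lp_norm r m (\<lambda>i. inverse (a + b) * (x i + y i)) \<le> 1 powr (1 / r)"
    unfolding lp_norm_def using r by (intro powr_mono2) (auto intro: sum_nonneg)
  then have "inverse (a + b) * lp_norm r m (\<lambda>i. x i + y i) \<le> 1"
    using lp_norm_scale[OF r, of "inverse (a + b)"] a b by simp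
  then show ?thesis
    using a b unfolding a_def b_def by (simp add: field_simps)
qed

text \<open>Jensen's inequality in every row, then the column sums, give the contraction.\<close>
lemma lp_norm_doubly_stochastic_le:
  fixes P :: "nat \<Rightarrow> nat \<Rightarrow> real"
  assumes r: "r \<ge> 1"
    and nonneg: "\<And>k l. k < m \<Longrightarrow> l < m \<Longrightarrow> 0 \<le> P k l"
    and row: "\<And>k. k < m \<Longrightarrow> (\<Sum>l<m. P k l) = 1"
    and col: "\<And>l. l < m \<Longrightarrow> (\<Sum>k<m. P k l) = 1"
  shows "lp_norm r m (\<lambda>k. \<Sum>l<m. P k l * w l) \<le> lp_norm r m w"
proof -
  have "\<bar>\<Sum>l<m. P k l * w l\<bar> powr r \<le> (\<Sum>l<m. P k l * \<bar>w l\<bar> powr r)" if k: "k < m" for k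
  proof -
    have "\<bar>\<Sum>l<m. P k l * w l\<bar> \<le> (\<Sum>l<m. P k l * \<bar>w l\<bar>)"
      using nonneg k by (auto intro: order_trans[OF sum_abs] sum_mono simp: abs_mult)
    then have "\<bar>\<Sum>l<m. P k l * w l\<bar> powr r \<le> (\<Sum>l<m. P k l * \<bar>w l\<bar>) powr r"
      using r by (intro powr_mono2) auto
    also have "\<dots> \<le> (\<Sum>l<m. P k l * \<bar>w l\<bar> powr r)"
      using convex_on_sum[OF _ _ powr_convex_nonneg[OF r], of "{..<m}" "P k" "\<lambda>l. \<bar>w l\<bar>"]
        nonneg k row[OF k] by fastforce
    finally show ?thesis .
  qed
  then have "(\<Sum>k<m. \<bar>\<Sum>l<m. P k l * w l\<bar> powr r) \<le> (\<Sum>k<m. \<Sum>l<m. P k l * \<bar>w l\<bar> powr r)"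
    by (intro sum_mono) auto
  also have "\<dots> = (\<Sum>l<m. \<bar>w l\<bar> powr r)"
    by (subst sum.swap) (simp add: sum_distrib_right[symmetric] col)
  finally show ?thesis
    unfolding lp_norm_def using r by (intro powr_mono2) (auto intro: sum_nonneg)
qed

definition sup_norm :: "nat \<Rightarrow> (nat \<Rightarrow> real) \<Rightarrow> real" where
  "sup_norm m x = Max (insert 0 ((\<lambda>i. \<bar>x i\<bar>) ` {..<m}))"

lemma sup_norm_nonneg: "0 \<le> sup_norm m x"
  unfolding sup_norm_def by (intro Max_ge) auto

lemma abs_le_sup_norm: "i < m \<Longrightarrow> \<bar>x i\<bar> \<le> sup_norm m x"
  unfolding sup_norm_def by (intro Max_ge) auto

lemma sup_norm_le: "0 \<le> c \<Longrightarrow> (\<And>i. i < m \<Longrightarrow> \<bar>x i\<bar> \<le> c) \<Longrightarrow> sup_norm m x \<le> c"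
  unfolding sup_norm_def by (subst Max_le_iff) auto

lemma sup_norm_pos: "i < m \<Longrightarrow> x i \<noteq> 0 \<Longrightarrow> 0 < sup_norm m x"
  using abs_le_sup_norm[of i m x] by auto

lemma sup_norm_cong: "(\<And>i. i < m \<Longrightarrow> x i = y i) \<Longrightarrow> sup_norm m x = sup_norm m y"
  unfolding sup_norm_def by (intro arg_cong[where f="\<lambda>s. Max (insert 0 s)"] image_cong) auto

lemma sup_norm_triangle: "sup_norm m (\<lambda>i. x i + y i) \<le> sup_norm m x + sup_norm m y"
  by (intro sup_norm_le add_nonneg_nonneg sup_norm_nonneg)
    (auto intro: order_trans[OF abs_triangle_ineq] add_mono abs_le_sup_norm)

lemma sup_norm_scale: "0 \<le> c \<Longrightarrow> sup_norm m (\<lambda>i. c * x i) \<le> c * sup_norm m x"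
  by (intro sup_norm_le) (auto simp: abs_mult sup_norm_nonneg intro: mult_left_mono abs_le_sup_norm)

lemma sup_norm_stochastic_le:
  fixes P :: "nat \<Rightarrow> nat \<Rightarrow> real"
  assumes nonneg: "\<And>k l. k < m \<Longrightarrow> l < m \<Longrightarrow> 0 \<le> P k l"
    and row: "\<And>k. k < m \<Longrightarrow> (\<Sum>l<m. P k l) = 1"
  shows "sup_norm m (\<lambda>k. \<Sum>l<m. P k l * w l) \<le> sup_norm m w"
proof (rule sup_norm_le[OF sup_norm_nonneg])
  fix k assume k: "k < m"
  have "\<bar>\<Sum>l<m. P k l * w l\<bar> \<le> (\<Sum>l<m. P k l * sup_norm m w)"
    using nonneg k
    by (auto intro!: order_trans[OF sum_abs] sum_mono mult_left_mono abs_le_sup_norm simp: abs_mult)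
  also have "\<dots> = sup_norm m w"
    using row[OF k] by (simp add: sum_distrib_right[symmetric])
  finally show "\<bar>\<Sum>l<m. P k l * w l\<bar> \<le> sup_norm m w" .
qed

lemma pnorm_cases:
  assumes "1 \<le> p"
  obtains "pnorm p m = sup_norm m" | r where "r \<ge> 1" "pnorm p m = lp_norm r m"
  using assms by (cases p) (auto simp: pnorm_def sup_norm_def lp_norm_def fun_eq_iff)

lemma pnorm_pos: "1 \<le> p \<Longrightarrow> i < m \<Longrightarrow> x i \<noteq> 0 \<Longrightarrow> 0 < pnorm p m x"
  by (cases rule: pnorm_cases[of p m]) (auto intro: sup_norm_pos lp_norm_pos)

lemma pnorm_cong: "1 \<le> p \<Longrightarrow> (\<And>i. i < m \<Longrightarrow> x i = y i) \<Longrightarrow> pnorm p m x = pnorm p m y"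
  by (cases rule: pnorm_cases[of p m]) (auto intro: sup_norm_cong lp_norm_cong)

lemma pnorm_triangle: "1 \<le> p \<Longrightarrow> pnorm p m (\<lambda>i. x i + y i) \<le> pnorm p m x + pnorm p m y"
  by (cases rule: pnorm_cases[of p m]) (auto intro: sup_norm_triangle lp_norm_triangle)

lemma pnorm_scale: "1 \<le> p \<Longrightarrow> 0 \<le> c \<Longrightarrow> pnorm p m (\<lambda>i. c * x i) \<le> c * pnorm p m x"
  by (cases rule: pnorm_cases[of p m]) (auto intro: sup_norm_scale simp: lp_norm_scale)

lemma pnorm_doubly_stochastic_le:
  fixes P :: "nat \<Rightarrow> nat \<Rightarrow> real"
  assumes "1 \<le> p"
    and "\<And>k l. k < m \<Longrightarrow> l < m \<Longrightarrow> 0 \<le> P k l"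
    and "\<And>k. k < m \<Longrightarrow> (\<Sum>l<m. P k l) = 1"
    and "\<And>l. l < m \<Longrightarrow> (\<Sum>k<m. P k l) = 1"
  shows "pnorm p m (\<lambda>k. \<Sum>l<m. P k l * w l) \<le> pnorm p m w"
  using assms
  by (cases rule: pnorm_cases[of p m]) (auto intro: sup_norm_stochastic_le lp_norm_doubly_stochastic_le)

lemma convex_on_pnorm_line:
  assumes p: "1 \<le> p"
  shows "convex_on UNIV (\<lambda>h. pnorm p m (\<lambda>i. w i + h * v i))"
proof (rule convex_onI)
  fix t a b :: real
  assume t: "0 < t" "t < 1"
  have "(\<lambda>i. w i + ((1 - t) *\<^sub>R a + t *\<^sub>R b) * v i)
      = (\<lambda>i. (1 - t) * (w i + a * v i) + t * (w i + b * v i))"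
    by (simp add: algebra_simps)
  then have "pnorm p m (\<lambda>i. w i + ((1 - t) *\<^sub>R a + t *\<^sub>R b) * v i)
      \<le> pnorm p m (\<lambda>i. (1 - t) * (w i + a * v i)) + pnorm p m (\<lambda>i. t * (w i + b * v i))"
    using pnorm_triangle[OF p, of m "\<lambda>i. (1 - t) * (w i + a * v i)"] by simp
  also have "\<dots> \<le> (1 - t) * pnorm p m (\<lambda>i. w i + a * v i) + t * pnorm p m (\<lambda>i. w i + b * v i)"
    using t by (intro add_mono pnorm_scale[OF p]) auto
  finally show "pnorm p m (\<lambda>i. w i + ((1 - t) *\<^sub>R a + t *\<^sub>R b) * v i)
      \<le> (1 - t) * pnorm p m (\<lambda>i. w i + a * v i) + t * pnorm p m (\<lambda>i. w i + b * v i)" .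
qed simp

text \<open>The difference quotients of a convex function increase with the step and are bounded below
  by a left difference quotient, so they converge to their infimum.\<close>
lemma convex_on_right_slope_tendsto:
  fixes f :: "real \<Rightarrow> real"
  assumes f: "convex_on UNIV f"
  shows "((\<lambda>h. (f h - f 0) / h) \<longlongrightarrow> Inf ((\<lambda>h. (f h - f 0) / h) ` {0<..})) (at_right 0)"
proof -
  have slope: "(f 0 - f x) / (0 - x) = (f x - f 0) / x" for x
    by (metis minus_diff_eq minus_divide_divide diff_0)
  have mono: "(f a - f 0) / a \<le> (f b - f 0) / b" if "0 < a" "a \<le> b" for a b
  proof (cases "a = b")
    case False
    then show ?thesis
      using convex_on_slope_le(1)[OF f, of 0 b a] that unfolding slope by simp
  qed simp
  have bound: "f 0 - f (-1) \<le> (f h - f 0) / h" if "0 < h" for h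
    using convex_on_slope_le[OF f, of "-1" h 0] that unfolding slope by simp
  have "((\<lambda>h. (f h - f 0) / h) \<longlongrightarrow> Inf ((\<lambda>h. (f h - f 0) / h) ` ({0<..} \<inter> UNIV)))
      (at 0 within {0<..} \<inter> UNIV)"
    by (rule Lim_right_bound[where K="f 0 - f (-1)"]) (auto intro: mono bound)
  then show ?thesis by simp
qed
lemma pnorm_slope_tendsto:
  assumes p: "1 \<le> p" and w: "0 < pnorm p m w"
  shows "\<exists>l. ((\<lambda>h. (pnorm p m (\<lambda>i. w i + h * v i) / pnorm p m w - 1) / h) \<longlongrightarrow> l) (at_right 0)"
proof -
  let ?f = "\<lambda>h. pnorm p m (\<lambda>i. w i + h * v i)"
  have f0: "?f 0 = pnorm p m w"
    by simp
  have "((\<lambda>h. (?f h - ?f 0) / h / ?f 0) \<longlongrightarrow> Inf ((\<lambda>h. (?f h - ?f 0) / h) ` {0<..}) / ?f 0) (at_right 0)"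
    using convex_on_right_slope_tendsto[OF convex_on_pnorm_line[OF p, of m w v]] tendsto_const
    by (rule tendsto_divide) (use w f0 in simp)
  moreover have "(\<lambda>h. (?f h - ?f 0) / h / ?f 0) = (\<lambda>h. (?f h / pnorm p m w - 1) / h)"
    using w f0 by (simp add: fun_eq_iff field_simps)
  ultimately show ?thesis
    by auto
qed

lemma mat_vec_diff: "mat_vec m A u i - mat_vec m A v i = mat_vec m A (\<lambda>j. u j - v j) i"
  unfolding mat_vec_def by (simp add: sum_subtractf right_diff_distrib)

text \<open>Under these hypotheses \<open>I + h A\<close> is doubly stochastic.\<close>
lemma pnorm_add_mat_vec_le:
  fixes A :: "nat \<Rightarrow> nat \<Rightarrow> real"
  assumes p: "1 \<le> p"
    and off: "\<And>k l. k < m \<Longrightarrow> l < m \<Longrightarrow> k \<noteq> l \<Longrightarrow> 0 \<le> A k l"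
    and row: "\<And>k. k < m \<Longrightarrow> (\<Sum>l<m. A k l) = 0"
    and col: "\<And>l. l < m \<Longrightarrow> (\<Sum>k<m. A k l) = 0"
    and h: "0 \<le> h" "\<And>k. k < m \<Longrightarrow> 0 \<le> 1 + h * A k k"
  shows "pnorm p m (\<lambda>i. w i + h * mat_vec m A w i) \<le> pnorm p m w"
proof -
  define P where "P k l = (if k = l then 1 else 0) + h * A k l" for k l
  have "P k l * w l = (if k = l then w l else 0) + h * (A k l * w l)" for k l
    by (simp add: P_def algebra_simps)
  then have "pnorm p m (\<lambda>i. w i + h * mat_vec m A w i) = pnorm p m (\<lambda>k. \<Sum>l<m. P k l * w l)"
    using p by (intro pnorm_cong) (simp_all add: mat_vec_def sum.distrib sum_distrib_left)
  also have "\<dots> \<le> pnorm p m w"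
  proof (rule pnorm_doubly_stochastic_le[OF p])
    show "0 \<le> P k l" if "k < m" "l < m" for k l
      using that h off[of k l] by (cases "k = l") (auto simp: P_def)
    show "(\<Sum>l<m. P k l) = 1" if "k < m" for k
      using that row[of k] by (simp add: P_def sum.distrib sum_distrib_left[symmetric])
    show "(\<Sum>k<m. P k l) = 1" if "l < m" for l
      using that col[of l] by (simp add: P_def sum.distrib sum_distrib_left[symmetric])
  qed
  finally show ?thesis .
qed

lemma slope_pnorm_add_mat_vec_nonpos:
  fixes A :: "nat \<Rightarrow> nat \<Rightarrow> real"
  assumes p: "1 \<le> p"
    and off: "\<And>k l. k < m \<Longrightarrow> l < m \<Longrightarrow> k \<noteq> l \<Longrightarrow> 0 \<le> A k l"
    and row: "\<And>k. k < m \<Longrightarrow> (\<Sum>l<m. A k l) = 0"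
    and col: "\<And>l. l < m \<Longrightarrow> (\<Sum>k<m. A k l) = 0"
    and w: "0 < pnorm p m w"
  shows "Lim (at_right 0) (\<lambda>h. (pnorm p m (\<lambda>i. w i + h * mat_vec m A w i) / pnorm p m w - 1) / h) \<le> 0"
proof -
  let ?q = "\<lambda>h. (pnorm p m (\<lambda>i. w i + h * mat_vec m A w i) / pnorm p m w - 1) / h"
  obtain l where l: "(?q \<longlongrightarrow> l) (at_right 0)"
    using pnorm_slope_tendsto[OF p w] by blast
  have "\<forall>\<^sub>F h in at_right 0. 0 < 1 + h * A k k" for k
    by (rule order_tendstoD) (auto intro!: tendsto_eq_intros tendsto_ident_at)
  then have "\<forall>\<^sub>F h in at_right 0. 0 < h \<and> (\<forall>k\<in>{..<m}. 0 < 1 + h * A k k)"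
    by (intro eventually_conj eventually_at_right_less eventually_ball_finite) auto
  then have "\<forall>\<^sub>F h in at_right 0. ?q h \<le> 0"
  proof (rule eventually_mono)
    fix h assume h: "0 < h \<and> (\<forall>k\<in>{..<m}. 0 < 1 + h * A k k)"
    then have "pnorm p m (\<lambda>i. w i + h * mat_vec m A w i) \<le> pnorm p m w"
      by (intro pnorm_add_mat_vec_le[OF p off row col]) (auto intro: less_imp_le)
    then show "?q h \<le> 0"
      using h w by (simp add: divide_nonpos_pos)
  qed
  then have "l \<le> 0"
    using l by (intro tendsto_upperbound) auto
  then show ?thesis
    using l by (simp add: tendsto_Lim)
qed

lemma logLip_sup_mat_vec_eq_0:
  fixes A :: "nat \<Rightarrow> nat \<Rightarrow> real"
  assumes p: "1 \<le> p" and m: "1 \<le> m"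
    and off: "\<And>k l. k < m \<Longrightarrow> l < m \<Longrightarrow> k \<noteq> l \<Longrightarrow> 0 \<le> A k l"
    and row: "\<And>k. k < m \<Longrightarrow> (\<Sum>l<m. A k l) = 0"
    and col: "\<And>l. l < m \<Longrightarrow> (\<Sum>k<m. A k l) = 0"
  shows "logLip_sup p m (mat_vec m A) = 0"
  unfolding logLip_sup_def
proof (rule antisym)
  let ?D = "{(u, v). u \<in> rvec m \<and> v \<in> rvec m \<and> u \<noteq> v}"
  let ?q = "\<lambda>u v h. (pnorm p m (\<lambda>i. u i - v i + h * (mat_vec m A u i - mat_vec m A v i))
                 / pnorm p m (\<lambda>i. u i - v i) - 1) / h"
  have "Lim (at_right 0) (?q u v) \<le> 0" if "(u, v) \<in> ?D" for u v
  proof -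
    have "u \<noteq> v"
      using that by simp
    then obtain i where "u i \<noteq> v i"
      by (meson ext)
    moreover have "i < m"
      using that calculation by (cases "i < m") (auto simp: rvec_def)
    ultimately have i: "i < m" "u i \<noteq> v i" by auto
    show ?thesis
      unfolding mat_vec_diff
      by (rule slope_pnorm_add_mat_vec_nonpos[OF p off row col]) (use pnorm_pos[OF p i(1)] i in auto)
  qed
  then show "(SUP uv\<in>?D. ereal (Lim (at_right 0) (?q (fst uv) (snd uv)))) \<le> 0"
    by (auto intro!: SUP_least)
  define one :: "nat \<Rightarrow> real" where "one i = (if i < m then 1 else 0)" for i
  have "mat_vec m A one = (\<lambda>i. 0)"
    using row by (auto simp: mat_vec_def one_def fun_eq_iff cong: if_cong)
  moreover have "mat_vec m A (\<lambda>i. 0) = (\<lambda>i. 0)"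
    by (simp add: mat_vec_def fun_eq_iff)
  moreover have "0 < pnorm p m one"
    using pnorm_pos[OF p, of 0 m one] m by (simp add: one_def)
  ultimately have "Lim (at_right 0) (?q one (\<lambda>i. 0)) = 0"
    by (simp add: tendsto_Lim)
  moreover have "(one, \<lambda>i. 0) \<in> ?D"
    using m by (auto simp: rvec_def one_def fun_eq_iff intro!: exI[of _ 0])
  ultimately show "0 \<le> (SUP uv\<in>?D. ereal (Lim (at_right 0) (?q (fst uv) (snd uv))))"
    by (intro SUP_upper2[of "(one, \<lambda>i. 0)"]) auto
qed

lemma kron_diag_mat_sym:
  assumes "\<And>i j. i < N \<Longrightarrow> j < N \<Longrightarrow> L i j = L j i" "k < N * n" "l < N * n"
  shows "kron n L (diag_mat d) k l = kron n L (diag_mat d) l k"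
  using assms less_mult_imp_div_less by (auto simp: kron_def diag_mat_def)

lemma kron_diag_mat_offdiag_nonpos:
  assumes "\<And>i j. i < N \<Longrightarrow> j < N \<Longrightarrow> i \<noteq> j \<Longrightarrow> L i j \<le> 0" "\<And>a. a < n \<Longrightarrow> 0 \<le> d a"
    and "k < N * n" "l < N * n" "k \<noteq> l"
  shows "kron n L (diag_mat d) k l \<le> 0"
proof (cases "k mod n = l mod n")
  case True
  then have "k div n \<noteq> l div n"
    using \<open>k \<noteq> l\<close> by (metis div_mod_decomp)
  then have "L (k div n) (l div n) \<le> 0"
    using assms less_mult_imp_div_less[of k N n] less_mult_imp_div_less[of l N n] by simp
  moreover have "0 \<le> d (k mod n)"
    using assms by (cases "n = 0") auto
  ultimately show ?thesis
    using True by (simp add: kron_def diag_mat_def mult_nonpos_nonneg)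
qed (simp add: kron_def diag_mat_def)

lemma sum_kron_diag_mat_row:
  assumes "k < N * n"
  shows "(\<Sum>l<N * n. kron n L (diag_mat d) k l) = (\<Sum>j<N. L (k div n) j) * d (k mod n)"
proof -
  have "k mod n < n"
    using assms by (cases "n = 0") auto
  then have "(\<Sum>b<n. kron n L (diag_mat d) k (b + j * n)) = L (k div n) j * d (k mod n)" for j
    by (simp add: kron_def diag_mat_def sum_distrib_left[symmetric])
  then show ?thesis
    by (simp add: sum_mult_product sum_distrib_right)
qed

theorem proposition4:
  fixes n N :: nat and d :: "nat \<Rightarrow> real" and L :: "nat \<Rightarrow> nat \<Rightarrow> real" and p :: ereal
  assumes "n \<ge> 1" and "N \<ge> 1"
    and "\<And>a. a < n \<Longrightarrow> d a > 0"
    and "\<And>i j. i < N \<Longrightarrow> j < N \<Longrightarrow> L i j = L j i"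
    and "\<And>i j. i < N \<Longrightarrow> j < N \<Longrightarrow> i \<noteq> j \<Longrightarrow> L i j \<le> 0"
    and "\<And>i. i < N \<Longrightarrow> (\<Sum>j<N. L i j) = 0"
    and "1 \<le> p"
  shows "logLip_sup p (N * n) (\<lambda>u. mat_vec (N * n) (\<lambda>k l. - kron n L (diag_mat d) k l) u) = 0"
proof (rule logLip_sup_mat_vec_eq_0)
  note n = assms(1) and N = assms(2) and d = assms(3) and sym = assms(4) and off = assms(5)
    and row = assms(6) and p = assms(7)
  show "1 \<le> p" by (fact p)
  show "1 \<le> N * n"
    using n N by simp
  show "0 \<le> - kron n L (diag_mat d) k l" if "k < N * n" "l < N * n" "k \<noteq> l" for k l
    using kron_diag_mat_offdiag_nonpos[OF off _ that] d by (simp add: less_imp_le)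
  have row_kron: "(\<Sum>l<N * n. - kron n L (diag_mat d) k l) = 0" if "k < N * n" for k
    using sum_kron_diag_mat_row[OF that] row[of "k div n"] less_mult_imp_div_less[OF that]
    by (simp add: sum_negf)
  show "(\<Sum>l<N * n. - kron n L (diag_mat d) k l) = 0" if "k < N * n" for k
    using row_kron[OF that] .
  show "(\<Sum>k<N * n. - kron n L (diag_mat d) k l) = 0" if "l < N * n" for l
  proof -
    have "kron n L (diag_mat d) k l = kron n L (diag_mat d) l k" if "k < N * n" for k
      using kron_diag_mat_sym[of N L k n l d] sym that \<open>l < N * n\<close> by blast
    then show ?thesis
      using row_kron[OF that] by simp
  qed
qed
end
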